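(* Let $d\ge 3$, $n\ge d+1$ and $2\le k\le d+1$. Then $\chi^{\mathsf{s}}_{d,k}(n)\ge \chi^{\mathsf{s}}_{d,d+1}(n)\ge \lfloor\sqrt{n-d+3}\rfloor+d-3$.
   Context: A $k$-uniform hypergraph $H=(V,E)$ consists of a finite set $V$ and $E\subseteq\binom{V}{k}$. A (linear) embedding of $H$ into $\mathbb{R}^d$ is a map $\phi:V(H)\to\mathbb{R}^d$ with $\dim\operatorname{aff}\phi(e)=k-1$ for every edge $e$ and $\operatorname{conv}\phi(e_1)\cap\operatorname{conv}\phi(e_2)=\operatorname{conv}\phi(e_1\cap e_2)$ for all edges $e_1,e_2$. $\mathcal{E}_{d,k}$ is the set of $k$-uniform hypergraphs admitting such an embedding into $\mathbb{R}^d$. A strong $c$-coloring of $H$ is a map $\kappa:V(H)\to\{1,\dots,c\}$ with $|\kappa(e)|=k$ for every edge $e$; $\chi^{\mathsf{s}}(H)$ is the least such $c$. $\chi^{\mathsf{s}}_{d,k}(n)=\max\{\chi^{\mathsf{s}}(H): H\in\mathcal{E}_{d,k},\ |V(H)|=n\}$. *)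

theory Defs
  imports "HOL-Analysis.Analysis"
begin

definition uniform_hypergraph :: "nat \<Rightarrow> nat set \<Rightarrow> nat set set \<Rightarrow> bool" where
  "uniform_hypergraph k V E \<longleftrightarrow> finite V \<and> (\<forall>e\<in>E. e \<subseteq> V \<and> card e = k)"

definition lin_embedding :: "(nat \<Rightarrow> 'a::euclidean_space) \<Rightarrow> nat \<Rightarrow> nat set set \<Rightarrow> bool" where
  "lin_embedding \<phi> k E \<longleftrightarrow>
     (\<forall>e\<in>E. aff_dim (\<phi> ` e) = int k - 1) \<and>
     (\<forall>e1\<in>E. \<forall>e2\<in>E. convex hull (\<phi> ` e1) \<inter> convex hull (\<phi> ` e2) = convex hull (\<phi> ` (e1 \<inter> e2)))"

definition strong_coloring :: "nat \<Rightarrow> nat set \<Rightarrow> nat set set \<Rightarrow> nat \<Rightarrow> (nat \<Rightarrow> nat) \<Rightarrow> bool" where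
  "strong_coloring k V E c \<kappa> \<longleftrightarrow> \<kappa> ` V \<subseteq> {1..c} \<and> (\<forall>e\<in>E. card (\<kappa> ` e) = k)"

definition strong_chromatic :: "nat \<Rightarrow> nat set \<Rightarrow> nat set set \<Rightarrow> nat" where
  "strong_chromatic k V E = (LEAST c. \<exists>\<kappa>. strong_coloring k V E c \<kappa>)"

text \<open>chi^s_{d,k}(n), where d = DIM('a).\<close>
definition chi_s_dk :: "'a::euclidean_space itself \<Rightarrow> nat \<Rightarrow> nat \<Rightarrow> nat" where
  "chi_s_dk _ k n = Max {strong_chromatic k V E | V E.
      uniform_hypergraph k V E \<and> card V = n \<and> (\<exists>\<phi>::nat \<Rightarrow> 'a. lin_embedding \<phi> k E)}"

end

theory Submission
  imports Defs "HOL-Computational_Algebra.Polynomial"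
begin

(* The first inequality holds because every (d+1)-uniform hypergraph embedded in R^d has a k-uniform
   "shadow" (all k-subsets of its edges) that is embedded by the same map: faces of an embedded
   simplex meet exactly in the face spanned by the common vertices.  A strong colouring of the
   shadow (k >= 2) is injective on every original edge, hence a strong colouring of the original.

   The second inequality is an explicit construction.  With a = d - 3 and m = floor(sqrt(n-d+3)),
   take the m x m grid vertices (x,y) and a apex vertices; for every pair i < j < m the edge is the
   "cross" {(i,i),(j,j),(i,j),(j,i)} together with all apices.  Vertices are placed on the moment
   curve t |-> (t, t^2, ..., t^d), where an affine functional is the same as a polynomial of
   degree <= d.  Points on the moment curve are affinely independent, and two edges meet properly
   as soon as a polynomial of degree <= d is <= 0 on one, >= 0 on the other and vanishes only at
   common vertices.  Such polynomials are products of an explicit cubic separating the two crosses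
   (found by a case analysis on the relative order of i, j, k, l) with a factor vanishing at the
   apices.  The m diagonal vertices together with the apices pairwise share an edge, so every
   strong colouring needs m + a = floor(sqrt(n-d+3)) + d - 3 colours. *)

section \<open>Strong chromatic numbers\<close>

lemma strong_coloring_inj_on_edge:
  assumes "uniform_hypergraph k V E" "strong_coloring k V E c \<kappa>" "e \<in> E"
  shows "inj_on \<kappa> e"
proof -
  have "finite e" "card e = k"
    using assms(1,3) finite_subset unfolding uniform_hypergraph_def by blast+
  moreover have "card (\<kappa> ` e) = k" using assms(2,3) unfolding strong_coloring_def by blast
  ultimately show ?thesis using eq_card_imp_inj_on by metis
qed

lemma strong_coloring_exists:
  assumes "uniform_hypergraph k V E"
  shows "\<exists>\<kappa>. strong_coloring k V E (card V) \<kappa>"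
proof -
  have fin: "finite V" using assms unfolding uniform_hypergraph_def by auto
  obtain f where f: "bij_betw f V {1..card V}"
    using fin by (metis bij_betw_iff_card card_atLeastAtMost diff_Suc_1 finite_atLeastAtMost)
  have "card (f ` e) = k" if "e \<in> E" for e
  proof -
    have "e \<subseteq> V" "card e = k" using assms that unfolding uniform_hypergraph_def by auto
    then show ?thesis using f by (metis bij_betw_def card_image inj_on_subset)
  qed
  then show ?thesis unfolding strong_coloring_def using f by (metis bij_betw_imp_surj_on order_refl)
qed

lemma strong_chromatic_le_coloring:
  assumes "strong_coloring k V E c \<kappa>"
  shows "strong_chromatic k V E \<le> c"
  using assms unfolding strong_chromatic_def by (metis (mono_tags) Least_le)

lemma strong_chromatic_le_card:
  assumes "uniform_hypergraph k V E"
  shows "strong_chromatic k V E \<le> card V"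
  using strong_coloring_exists[OF assms] strong_chromatic_le_coloring by blast

lemma strong_chromatic_lowerI:
  assumes "uniform_hypergraph k V E"
    and "\<And>c \<kappa>. strong_coloring k V E c \<kappa> \<Longrightarrow> b \<le> c"
  shows "b \<le> strong_chromatic k V E"
proof -
  have "\<exists>c \<kappa>. strong_coloring k V E c \<kappa>" using strong_coloring_exists[OF assms(1)] by blast
  then have "\<exists>\<kappa>. strong_coloring k V E (strong_chromatic k V E) \<kappa>"
    unfolding strong_chromatic_def by (rule LeastI_ex)
  then show ?thesis using assms(2) by blast
qed

lemma strong_chromatic_ge_clique:
  assumes U: "uniform_hypergraph k V E" and "C \<subseteq> V"
    and common: "\<And>u w. u \<in> C \<Longrightarrow> w \<in> C \<Longrightarrow> \<exists>e\<in>E. u \<in> e \<and> w \<in> e"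
  shows "card C \<le> strong_chromatic k V E"
proof (rule strong_chromatic_lowerI[OF U])
  fix c \<kappa> assume sc: "strong_coloring k V E c \<kappa>"
  have "inj_on \<kappa> C"
  proof (rule inj_onI)
    fix u w assume "u \<in> C" "w \<in> C" "\<kappa> u = \<kappa> w"
    moreover obtain e where "e \<in> E" "u \<in> e" "w \<in> e" using common \<open>u \<in> C\<close> \<open>w \<in> C\<close> by blast
    ultimately show "u = w" using strong_coloring_inj_on_edge[OF U sc] inj_onD by metis
  qed
  moreover have "\<kappa> ` C \<subseteq> {1..c}" using sc \<open>C \<subseteq> V\<close> unfolding strong_coloring_def by auto
  ultimately show "card C \<le> c" using card_mono[of "{1..c}" "\<kappa> ` C"] card_image by fastforce
qed

text \<open>The maximum defining \<open>\<chi>\<^sup>s\<^sub>d\<^sub>,\<^sub>k(n)\<close> ranges over a finite nonempty set: the empty hypergraph on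
  \<open>n\<close> vertices is embeddable, and every value is at most \<open>n\<close>.\<close>
definition embedded_chromatic_numbers :: "'a::euclidean_space itself \<Rightarrow> nat \<Rightarrow> nat \<Rightarrow> nat set" where
  "embedded_chromatic_numbers T k n = {strong_chromatic k V E | V E.
      uniform_hypergraph k V E \<and> card V = n \<and> (\<exists>\<phi>::nat \<Rightarrow> 'a. lin_embedding \<phi> k E)}"

lemma embedded_chromatic_numbers_finite: "finite (embedded_chromatic_numbers T k n)"
proof -
  have "embedded_chromatic_numbers T k n \<subseteq> {..n}"
    unfolding embedded_chromatic_numbers_def using strong_chromatic_le_card by fastforce
  then show ?thesis using finite_subset by blast
qed

lemma embedded_chromatic_numbers_nonempty:
  "embedded_chromatic_numbers (T::'a::euclidean_space itself) k n \<noteq> {}"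
proof -
  have "uniform_hypergraph k {0..<n} {}" unfolding uniform_hypergraph_def by simp
  moreover have "lin_embedding (\<lambda>_. 0::'a) k {}" unfolding lin_embedding_def by simp
  ultimately show ?thesis unfolding embedded_chromatic_numbers_def by fastforce
qed

lemma chi_s_dk_Max: "chi_s_dk TYPE('a) k n = Max (embedded_chromatic_numbers TYPE('a::euclidean_space) k n)"
  unfolding chi_s_dk_def embedded_chromatic_numbers_def by simp

lemma chi_s_dk_ge:
  assumes "uniform_hypergraph k V E" "card V = n" "lin_embedding (\<phi>::nat \<Rightarrow> 'a::euclidean_space) k E"
  shows "strong_chromatic k V E \<le> chi_s_dk TYPE('a) k n"
proof -
  have "strong_chromatic k V E \<in> embedded_chromatic_numbers TYPE('a) k n"
    unfolding embedded_chromatic_numbers_def using assms by blast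
  then show ?thesis unfolding chi_s_dk_Max using embedded_chromatic_numbers_finite Max_ge by blast
qed

lemma chi_s_dk_attained:
  obtains V E and \<phi> :: "nat \<Rightarrow> 'a::euclidean_space"
  where "uniform_hypergraph k V E" "card V = n" "lin_embedding \<phi> k E"
    "chi_s_dk TYPE('a) k n = strong_chromatic k V E"
proof -
  have "chi_s_dk TYPE('a) k n \<in> embedded_chromatic_numbers TYPE('a) k n"
    unfolding chi_s_dk_Max
    using embedded_chromatic_numbers_finite embedded_chromatic_numbers_nonempty by (rule Max_in)
  then show ?thesis using that unfolding embedded_chromatic_numbers_def by auto
qed

section \<open>Monotonicity in the edge size\<close>

lemma simplex_faces_Int:
  fixes P :: "'a::euclidean_space set"
  assumes "\<not> affine_dependent P" "A \<subseteq> P" "B \<subseteq> P"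
  shows "convex hull A \<inter> convex hull B = convex hull (A \<inter> B)"
proof
  show "convex hull (A \<inter> B) \<subseteq> convex hull A \<inter> convex hull B"
    by (simp add: hull_mono)
  have fA: "convex hull A face_of convex hull P" and fB: "convex hull B face_of convex hull P"
    using face_of_convex_hull_affine_independent[OF assms(1)] assms(2,3) by blast+
  have "(convex hull A \<inter> convex hull B) face_of convex hull P"
    using face_of_Int[OF fA fB] .
  then obtain c where c: "c \<subseteq> P" "convex hull A \<inter> convex hull B = convex hull c"
    using face_of_convex_hull_affine_independent[OF assms(1)] by blast
  have "c \<subseteq> A \<inter> B"
  proof
    fix v assume v: "v \<in> c"
    have ext: "v extreme_point_of convex hull P"
      using extreme_point_of_convex_hull_affine_independent[OF assms(1)] v c by blast
    have vAB: "v \<in> convex hull A" "v \<in> convex hull B" using c v hull_inc[of v c] by auto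
    have "v extreme_point_of convex hull A" "v extreme_point_of convex hull B"
      using extreme_point_of_face[OF fA] extreme_point_of_face[OF fB] ext vAB by blast+
    then show "v \<in> A \<inter> B" using extreme_point_of_convex_hull by blast
  qed
  then show "convex hull A \<inter> convex hull B \<subseteq> convex hull (A \<inter> B)"
    using c by (simp add: hull_mono)
qed

lemma lin_embedding_edge_simplex:
  assumes "lin_embedding (\<phi>::nat \<Rightarrow> 'a::euclidean_space) k E" "e \<in> E" "finite e" "card e = k"
  shows "\<not> affine_dependent (\<phi> ` e)" "inj_on \<phi> e"
proof -
  have ad: "aff_dim (\<phi> ` e) = int k - 1" using assms unfolding lin_embedding_def by auto
  have f: "finite (\<phi> ` e)" using assms by auto
  have "card (\<phi> ` e) \<le> k" using card_image_le[OF assms(3)] assms(4) by simp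
  moreover have "aff_dim (\<phi> ` e) \<le> int (card (\<phi> ` e)) - 1" using aff_dim_le_card[OF f] by simp
  ultimately have c: "card (\<phi> ` e) = k" using ad by linarith
  then show "inj_on \<phi> e" using assms(3,4) by (simp add: eq_card_imp_inj_on)
  show "\<not> affine_dependent (\<phi> ` e)" using affine_independent_iff_card[of "\<phi> ` e"] f ad c by simp
qed

definition shadow :: "nat \<Rightarrow> nat set set \<Rightarrow> nat set set" where
  "shadow k E = {f. \<exists>e\<in>E. f \<subseteq> e \<and> card f = k}"

lemma shadow_uniform:
  assumes "uniform_hypergraph K V E"
  shows "uniform_hypergraph k V (shadow k E)"
  using assms unfolding uniform_hypergraph_def shadow_def by auto

text \<open>An embedding of a hypergraph embeds its shadow as well, since subsets of embedded simplices
  meet properly by the face lemma above.\<close>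
lemma shadow_lin_embedding:
  assumes U: "uniform_hypergraph K V E" and L: "lin_embedding (\<phi>::nat \<Rightarrow> 'a::euclidean_space) K E"
  shows "lin_embedding \<phi> k (shadow k E)"
proof -
  have simplex: "\<not> affine_dependent (\<phi> ` e)" "inj_on \<phi> e" if "e \<in> E" for e
  proof -
    have "finite e" "card e = K"
      using U that finite_subset unfolding uniform_hypergraph_def by blast+
    then show "\<not> affine_dependent (\<phi> ` e)" "inj_on \<phi> e"
      using lin_embedding_edge_simplex[OF L that] by blast+
  qed
  have face_Int: "convex hull \<phi> ` A \<inter> convex hull \<phi> ` B = convex hull \<phi> ` (A \<inter> B)"
    if "e \<in> E" "A \<subseteq> e" "B \<subseteq> e" for e A B
    using simplex_faces_Int[OF simplex(1)[OF that(1)], of "\<phi> ` A" "\<phi> ` B"]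
      inj_on_image_Int[OF simplex(2)[OF that(1)] that(2,3)] that(2,3) by (simp add: image_mono)
  show ?thesis unfolding lin_embedding_def
  proof (intro conjI ballI)
    fix f assume "f \<in> shadow k E"
    then obtain e where e: "e \<in> E" "f \<subseteq> e" "card f = k" unfolding shadow_def by auto
    have "\<not> affine_dependent (\<phi> ` f)"
      using simplex(1)[OF e(1)] e(2) affine_dependent_subset image_mono by metis
    moreover have "card (\<phi> ` f) = k"
      using simplex(2)[OF e(1)] e(2,3) by (metis card_image inj_on_subset)
    ultimately show "aff_dim (\<phi> ` f) = int k - 1"
      using affine_independent_iff_card by auto
  next
    fix f1 f2 assume "f1 \<in> shadow k E" "f2 \<in> shadow k E"
    then obtain e1 e2 where e: "e1 \<in> E" "f1 \<subseteq> e1" "e2 \<in> E" "f2 \<subseteq> e2"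
      unfolding shadow_def by auto
    have e12: "convex hull \<phi> ` e1 \<inter> convex hull \<phi> ` e2 = convex hull \<phi> ` (e1 \<inter> e2)"
      using L e unfolding lin_embedding_def by auto
    have "convex hull \<phi> ` f1 \<subseteq> convex hull \<phi> ` e1" "convex hull \<phi> ` f2 \<subseteq> convex hull \<phi> ` e2"
      using e by (simp_all add: hull_mono image_mono)
    then have "convex hull \<phi> ` f1 \<inter> convex hull \<phi> ` f2
        = convex hull \<phi> ` f1 \<inter> (convex hull \<phi> ` e1 \<inter> convex hull \<phi> ` e2) \<inter> convex hull \<phi> ` f2"
      by blast
    also have "\<dots> = (convex hull \<phi> ` f1 \<inter> convex hull \<phi> ` (e1 \<inter> e2)) \<inter> convex hull \<phi> ` f2"
      using e12 by blast
    also have "\<dots> = convex hull \<phi> ` (f1 \<inter> e2) \<inter> convex hull \<phi> ` f2"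
    proof -
      have "f1 \<inter> (e1 \<inter> e2) = f1 \<inter> e2" using e(2) by blast
      then show ?thesis using face_Int[OF e(1,2), of "e1 \<inter> e2"] by simp
    qed
    also have "\<dots> = convex hull \<phi> ` (f1 \<inter> f2)"
    proof -
      have "(f1 \<inter> e2) \<inter> f2 = f1 \<inter> f2" using e(4) by blast
      then show ?thesis using face_Int[OF e(3), of "f1 \<inter> e2" f2] e(4) by simp
    qed
    finally show "convex hull \<phi> ` f1 \<inter> convex hull \<phi> ` f2 = convex hull \<phi> ` (f1 \<inter> f2)" .
  qed
qed

text \<open>For \<open>k \<ge> 2\<close>, a strong colouring of the shadow is a strong colouring of the hypergraph:
  any two vertices of an edge lie in a common \<open>k\<close>-subset of it.\<close>
lemma strong_chromatic_le_shadow: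
  assumes U: "uniform_hypergraph K V E" and "2 \<le> k" "k \<le> K"
  shows "strong_chromatic K V E \<le> strong_chromatic k V (shadow k E)"
proof (rule strong_chromatic_lowerI[OF shadow_uniform[OF U]])
  fix c \<kappa> assume sc: "strong_coloring k V (shadow k E) c \<kappa>"
  have "card (\<kappa> ` e) = K" if e: "e \<in> E" for e
  proof -
    have fin: "finite e" "card e = K" "e \<subseteq> V"
      using U e finite_subset unfolding uniform_hypergraph_def by blast+
    have "inj_on \<kappa> e"
    proof (rule inj_onI)
      fix x y assume xy: "x \<in> e" "y \<in> e" "\<kappa> x = \<kappa> y"
      have "card {x, y} \<le> k" using \<open>2 \<le> k\<close> by (simp add: card_insert_if)
      moreover have "k \<le> card e" using fin \<open>k \<le> K\<close> by simp
      ultimately obtain f where f: "{x, y} \<subseteq> f" "f \<subseteq> e" "card f = k"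
        using xy fin by (meson obtain_subset_with_card_n exists_subset_between insert_subset empty_subsetI)
      then have "f \<in> shadow k E" unfolding shadow_def using e by auto
      then have "inj_on \<kappa> f" using strong_coloring_inj_on_edge[OF shadow_uniform[OF U] sc] by blast
      then show "x = y" using xy f inj_onD by fastforce
    qed
    then show ?thesis using fin card_image by metis
  qed
  then have "strong_coloring K V E c \<kappa>" using sc unfolding strong_coloring_def by blast
  then show "strong_chromatic K V E \<le> c" by (rule strong_chromatic_le_coloring)
qed

lemma chi_s_dk_antimono:
  assumes "2 \<le> k" "k \<le> K"
  shows "chi_s_dk TYPE('a::euclidean_space) K n \<le> chi_s_dk TYPE('a) k n"
proof -
  obtain V E and \<phi> :: "nat \<Rightarrow> 'a" where U: "uniform_hypergraph K V E" and "card V = n"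
    and L: "lin_embedding \<phi> K E" and max: "chi_s_dk TYPE('a) K n = strong_chromatic K V E"
    by (rule chi_s_dk_attained)
  have "strong_chromatic K V E \<le> strong_chromatic k V (shadow k E)"
    using strong_chromatic_le_shadow[OF U assms] .
  also have "\<dots> \<le> chi_s_dk TYPE('a) k n"
    using chi_s_dk_ge[OF shadow_uniform[OF U] \<open>card V = n\<close> shadow_lin_embedding[OF U L]] .
  finally show ?thesis using max by simp
qed

section \<open>The moment curve\<close>

text \<open>An affine functional evaluated along it is a polynomial of degree
  \<open>\<le> d\<close>, and conversely.\<close>
definition moment_curve :: "(nat \<Rightarrow> 'a::euclidean_space) \<Rightarrow> real \<Rightarrow> 'a" where
  "moment_curve \<beta> t = (\<Sum>i<DIM('a). t ^ Suc i *\<^sub>R \<beta> i)"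

lemma moment_curve_coord:
  fixes \<beta> :: "nat \<Rightarrow> 'a::euclidean_space"
  assumes \<beta>: "bij_betw \<beta> {..<DIM('a)} Basis" and i: "i < DIM('a)"
  shows "inner (\<beta> i) (moment_curve \<beta> t) = t ^ Suc i"
proof -
  have orth: "inner (\<beta> i) (\<beta> j) = (if j = i then 1 else 0)" if "j < DIM('a)" for j
  proof -
    have "\<beta> i \<in> Basis" "\<beta> j \<in> Basis" using \<beta> that i by (auto simp: bij_betw_def)
    moreover have "\<beta> i = \<beta> j \<longleftrightarrow> i = j" using \<beta> that i by (auto simp: bij_betw_def inj_on_def)
    ultimately show ?thesis by (auto simp: inner_Basis)
  qed
  have "inner (\<beta> i) (moment_curve \<beta> t) = (\<Sum>j<DIM('a). t ^ Suc j * inner (\<beta> i) (\<beta> j))"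
    unfolding moment_curve_def by (simp add: inner_sum_right)
  also have "\<dots> = (\<Sum>j<DIM('a). if j = i then t ^ Suc j else 0)"
    by (rule sum.cong) (simp_all add: orth)
  also have "\<dots> = t ^ Suc i" using i by simp
  finally show ?thesis .
qed

lemma moment_curve_inj:
  fixes \<beta> :: "nat \<Rightarrow> 'a::euclidean_space"
  assumes "bij_betw \<beta> {..<DIM('a)} Basis"
  shows "inj (moment_curve \<beta>)"
proof (rule injI)
  fix x y assume "moment_curve \<beta> x = moment_curve \<beta> y"
  then have "inner (\<beta> 0) (moment_curve \<beta> x) = inner (\<beta> 0) (moment_curve \<beta> y)" by simp
  then show "x = y" using moment_curve_coord[OF assms DIM_positive] by simp
qed

lemma poly_moment_curve:
  fixes \<beta> :: "nat \<Rightarrow> 'a::euclidean_space"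
  assumes \<beta>: "bij_betw \<beta> {..<DIM('a)} Basis" and deg: "degree q \<le> DIM('a)"
  shows "\<exists>c w. \<forall>t. poly q t = c + inner w (moment_curve \<beta> t)"
proof (intro exI allI)
  fix t
  have "poly q t = (\<Sum>i\<le>degree q. coeff q i * t ^ i)" by (rule poly_altdef)
  also have "\<dots> = (\<Sum>i<Suc DIM('a). coeff q i * t ^ i)"
    by (rule sum.mono_neutral_left) (use deg le_degree in \<open>force+\<close>)
  also have "\<dots> = coeff q 0 + (\<Sum>i<DIM('a). coeff q (Suc i) * t ^ Suc i)"
    by (subst sum.lessThan_Suc_shift) simp
  also have "\<dots> = coeff q 0 + inner (\<Sum>i<DIM('a). coeff q (Suc i) *\<^sub>R \<beta> i) (moment_curve \<beta> t)"
    by (simp add: inner_sum_left moment_curve_coord[OF \<beta>])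
  finally show "poly q t = coeff q 0 + inner (\<Sum>i<DIM('a). coeff q (Suc i) *\<^sub>R \<beta> i) (moment_curve \<beta> t)" .
qed

definition root_poly :: "real list \<Rightarrow> real poly" where
  "root_poly R = prod_list (map (\<lambda>r. [:-r, 1:]) R)"

lemma poly_root_poly: "poly (root_poly R) t = prod_list (map (\<lambda>r. t - r) R)"
  unfolding root_poly_def by (induction R) (auto simp: algebra_simps)

lemma poly_root_poly_eq_0: "poly (root_poly R) t = 0 \<longleftrightarrow> t \<in> set R"
  unfolding poly_root_poly prod_list_zero_iff by auto

lemma degree_root_poly: "degree (root_poly R) \<le> length R"
proof -
  have "degree (root_poly R) \<le> sum_list (map degree (map (\<lambda>r. [:-r, 1:]) R))"
    unfolding root_poly_def by (rule degree_prod_list_le)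
  also have "\<dots> = length R" by (induction R) auto
  finally show ?thesis .
qed

text \<open>Any \<open>d + 1\<close> distinct points of the moment curve are affinely independent: an affine dependence
  would be annihilated by the polynomial vanishing at all but one of the points.\<close>
lemma moment_curve_affine_independent:
  fixes \<beta> :: "nat \<Rightarrow> 'a::euclidean_space"
  assumes \<beta>: "bij_betw \<beta> {..<DIM('a)} Basis" and X: "finite X" "card X \<le> Suc DIM('a)"
  shows "\<not> affine_dependent (moment_curve \<beta> ` X)"
proof
  let ?\<gamma> = "moment_curve \<beta>"
  assume "affine_dependent (?\<gamma> ` X)"
  then obtain U s0 where U: "sum U (?\<gamma> ` X) = 0" "(\<Sum>v\<in>?\<gamma> ` X. U v *\<^sub>R v) = 0"
    and s0: "s0 \<in> X" "U (?\<gamma> s0) \<noteq> 0"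
    using affine_dependent_explicit_finite[of "?\<gamma> ` X"] X by auto
  define R where "R = sorted_list_of_set (X - {s0})"
  have setR: "set R = X - {s0}" and "length R \<le> DIM('a)"
    using X s0 by (simp_all add: R_def card_Diff_singleton)
  then obtain c w where cw: "\<And>t. poly (root_poly R) t = c + inner w (?\<gamma> t)"
    using poly_moment_curve[OF \<beta>] degree_root_poly[of R] by (meson le_trans)
  have inj: "inj_on ?\<gamma> X" using moment_curve_inj[OF \<beta>] by (simp add: inj_on_def inj_def)
  have "(\<Sum>s\<in>X. U (?\<gamma> s) * poly (root_poly R) s)
      = c * sum U (?\<gamma> ` X) + inner w (\<Sum>v\<in>?\<gamma> ` X. U v *\<^sub>R v)"
    by (simp add: cw sum.reindex[OF inj] inner_sum_right sum_distrib_left distrib_left sum.distrib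
        algebra_simps)
  also have "\<dots> = 0" using U by simp
  finally have "(\<Sum>s\<in>X. U (?\<gamma> s) * poly (root_poly R) s) = 0" .
  moreover have "(\<Sum>s\<in>X - {s0}. U (?\<gamma> s) * poly (root_poly R) s) = 0"
    using setR by (intro sum.neutral) (auto simp: poly_root_poly_eq_0)
  ultimately have "U (?\<gamma> s0) * poly (root_poly R) s0 = 0"
    using sum.remove[OF X(1) s0(1), of "\<lambda>s. U (?\<gamma> s) * poly (root_poly R) s"] by simp
  moreover have "poly (root_poly R) s0 \<noteq> 0" using setR by (simp add: poly_root_poly_eq_0)
  ultimately show False using s0 by simp
qed

lemma convex_hull_Int_subset_zero_set:
  fixes S T :: "'a::euclidean_space set"
  assumes S: "finite S" and T: "finite T"
    and neg: "\<And>s. s \<in> S \<Longrightarrow> c + inner w s \<le> 0"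
    and pos: "\<And>s. s \<in> T \<Longrightarrow> c + inner w s \<ge> 0"
  shows "convex hull S \<inter> convex hull T \<subseteq> convex hull {s\<in>S. c + inner w s = 0}"
proof
  fix x assume x: "x \<in> convex hull S \<inter> convex hull T"
  have value_at: "c + inner w x = (\<Sum>s\<in>A. u s * (c + inner w s))"
    if "sum u A = 1" "(\<Sum>s\<in>A. u s *\<^sub>R s) = x" for u A
  proof -
    have "inner w x = (\<Sum>s\<in>A. u s * inner w s)" using that(2) by (auto simp: inner_sum_right)
    moreover have "c = (\<Sum>s\<in>A. u s * c)" using that(1) by (simp add: sum_distrib_right[symmetric])
    ultimately show ?thesis by (simp add: distrib_left sum.distrib)
  qed
  obtain u where u: "\<forall>s\<in>S. 0 \<le> u s" "sum u S = 1" "(\<Sum>s\<in>S. u s *\<^sub>R s) = x"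
    using x convex_hull_finite[OF S] by auto
  obtain v where v: "\<forall>s\<in>T. 0 \<le> v s" "sum v T = 1" "(\<Sum>s\<in>T. v s *\<^sub>R s) = x"
    using x convex_hull_finite[OF T] by auto
  have "(\<Sum>s\<in>S. u s * (c + inner w s)) \<le> 0"
    using u neg by (intro sum_nonpos) (simp add: mult_nonneg_nonpos)
  moreover have "(\<Sum>s\<in>T. v s * (c + inner w s)) \<ge> 0"
    using v pos by (intro sum_nonneg) simp
  ultimately have "(\<Sum>s\<in>S. - (u s * (c + inner w s))) = 0"
    using value_at[OF u(2,3)] value_at[OF v(2,3)] by (simp add: sum_negf)
  then have "\<forall>s\<in>S. u s * (c + inner w s) = 0"
    using sum_nonneg_eq_0_iff[OF S, of "\<lambda>s. - (u s * (c + inner w s))"] u neg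
    by (simp add: mult_nonneg_nonpos)
  then have u0: "u s = 0" if "s \<in> S - {s\<in>S. c + inner w s = 0}" for s using that by auto
  have "sum u {s\<in>S. c + inner w s = 0} = 1"
    using u(2) sum.mono_neutral_left[OF S, of "{s\<in>S. c + inner w s = 0}" u] u0 by auto
  moreover have "(\<Sum>s\<in>{s\<in>S. c + inner w s = 0}. u s *\<^sub>R s) = x"
    using u(3) sum.mono_neutral_left[OF S, of "{s\<in>S. c + inner w s = 0}" "\<lambda>s. u s *\<^sub>R s"] u0
    by auto
  ultimately show "x \<in> convex hull {s\<in>S. c + inner w s = 0}"
    using S u(1) by (auto simp: convex_hull_finite)
qed

lemma moment_curve_separation:
  fixes \<beta> :: "nat \<Rightarrow> 'a::euclidean_space" and \<tau> :: "nat \<Rightarrow> real"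
  assumes \<beta>: "bij_betw \<beta> {..<DIM('a)} Basis" and deg: "degree q \<le> DIM('a)"
    and fin: "finite e1" "finite e2"
    and neg: "\<And>v. v \<in> e1 \<Longrightarrow> poly q (\<tau> v) \<le> 0"
    and pos: "\<And>v. v \<in> e2 \<Longrightarrow> poly q (\<tau> v) \<ge> 0"
    and zero: "\<And>v. v \<in> e1 \<Longrightarrow> poly q (\<tau> v) = 0 \<Longrightarrow> v \<in> e2"
  shows "convex hull ((\<lambda>v. moment_curve \<beta> (\<tau> v)) ` e1) \<inter> convex hull ((\<lambda>v. moment_curve \<beta> (\<tau> v)) ` e2)
       = convex hull ((\<lambda>v. moment_curve \<beta> (\<tau> v)) ` (e1 \<inter> e2))"
    (is "convex hull (?\<phi> ` e1) \<inter> convex hull (?\<phi> ` e2) = _")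
proof
  show "convex hull (?\<phi> ` (e1 \<inter> e2)) \<subseteq> convex hull (?\<phi> ` e1) \<inter> convex hull (?\<phi> ` e2)"
    by (simp add: hull_mono image_mono)
  obtain c w where cw: "\<And>t. poly q t = c + inner w (moment_curve \<beta> t)"
    using poly_moment_curve[OF \<beta> deg] by blast
  have "convex hull (?\<phi> ` e1) \<inter> convex hull (?\<phi> ` e2) \<subseteq> convex hull {s\<in>?\<phi> ` e1. c + inner w s = 0}"
  proof (rule convex_hull_Int_subset_zero_set)
    show "finite (?\<phi> ` e1)" "finite (?\<phi> ` e2)" using fin by auto
    show "c + inner w s \<le> 0" if "s \<in> ?\<phi> ` e1" for s using that neg cw by auto
    show "c + inner w s \<ge> 0" if "s \<in> ?\<phi> ` e2" for s using that pos cw by auto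
  qed
  also have "\<dots> \<subseteq> convex hull (?\<phi> ` (e1 \<inter> e2))"
    by (rule hull_mono) (use zero cw in auto)
  finally show "convex hull (?\<phi> ` e1) \<inter> convex hull (?\<phi> ` e2) \<subseteq> convex hull (?\<phi> ` (e1 \<inter> e2))" .
qed

section \<open>Separating crosses of the grid by cubic polynomials\<close>

text \<open>Grid vertex \<open>(x, y)\<close>, \<open>x, y < m\<close>, gets the parameter \<open>grid_param m x y\<close> in the block
  \<open>[m x + 1, m x + m]\<close> of row \<open>x\<close>; inside the block, the diagonal vertex comes last and the
  off-diagonal vertices are ordered by \<open>|x - y|\<close> to the left and by \<open>y\<close> to the right of \<open>x\<close>.\<close>
definition grid_param :: "nat \<Rightarrow> nat \<Rightarrow> nat \<Rightarrow> nat" where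
  "grid_param m x y = (if x = y then m*x + m else if x < y then m*x + y else m*x + x - y)"

definition cross :: "nat \<Rightarrow> nat \<Rightarrow> (nat \<times> nat) set" where
  "cross i j = {(i,i), (j,j), (i,j), (j,i)}"

definition root_prod :: "real list \<Rightarrow> real \<Rightarrow> real \<Rightarrow> real" where
  "root_prod R \<epsilon> t = \<epsilon> * prod_list (map (\<lambda>r. t - r) R)"

definition separable :: "nat \<Rightarrow> nat \<Rightarrow> nat \<Rightarrow> nat \<Rightarrow> nat \<Rightarrow> bool" where
  "separable m i j k l \<longleftrightarrow> (\<exists>\<epsilon> R. length R \<le> 3 \<and>
     (\<forall>(x,y)\<in>cross i j. root_prod R \<epsilon> (real (grid_param m x y)) \<le> 0) \<and>
     (\<forall>(x,y)\<in>cross k l. root_prod R \<epsilon> (real (grid_param m x y)) \<ge> 0) \<and>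
     (\<forall>(x,y)\<in>cross i j \<union> cross k l. root_prod R \<epsilon> (real (grid_param m x y)) = 0 \<longrightarrow>
         (x,y) \<in> cross i j \<inter> cross k l))"

lemma cross_swap: "cross i j = cross j i"
  unfolding cross_def by auto

text \<open>Negating the polynomial exchanges the roles of the two crosses.\<close>
lemma separable_sym:
  assumes "separable m i j k l"
  shows "separable m k l i j"
proof -
  obtain \<epsilon> R where "length R \<le> 3"
    "\<And>x y. (x,y) \<in> cross i j \<Longrightarrow> root_prod R \<epsilon> (real (grid_param m x y)) \<le> 0"
    "\<And>x y. (x,y) \<in> cross k l \<Longrightarrow> root_prod R \<epsilon> (real (grid_param m x y)) \<ge> 0"
    "\<And>x y. (x,y) \<in> cross i j \<union> cross k l \<Longrightarrow> root_prod R \<epsilon> (real (grid_param m x y)) = 0 \<Longrightarrow>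
       (x,y) \<in> cross i j \<inter> cross k l"
    using assms unfolding separable_def by fast
  moreover have "root_prod R (- \<epsilon>) t = - root_prod R \<epsilon> t" for t by (simp add: root_prod_def)
  ultimately show ?thesis unfolding separable_def by (intro exI[of _ "- \<epsilon>"] exI[of _ R]) (auto; blast)
qed

lemma separable_swap1: "separable m i j k l \<longleftrightarrow> separable m j i k l"
  unfolding separable_def by (simp add: cross_swap[of i j])

lemma separable_swap2: "separable m i j k l \<longleftrightarrow> separable m i j l k"
  unfolding separable_def by (simp add: cross_swap[of k l])

lemma grid_param_bounds: "x < m \<Longrightarrow> y < m \<Longrightarrow> m*x + 1 \<le> grid_param m x y \<and> grid_param m x y \<le> m*x + m"
  unfolding grid_param_def by auto

lemma block_le: "(c::nat) < c' \<Longrightarrow> m*c + m \<le> m*c'"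
proof -
  assume "c < c'"
  then have "m * Suc c \<le> m * c'" by (intro mult_le_mono2) simp
  then show ?thesis by simp
qed

lemma grid_param_le_square: "x < m \<Longrightarrow> y < m \<Longrightarrow> grid_param m x y \<le> m*m"
  using grid_param_bounds[of x m y] block_le[of x m m] by simp

lemma grid_param_inj: "inj_on (\<lambda>(x,y). grid_param m x y) {p. fst p < m \<and> snd p < m}"
proof (rule inj_onI, clarsimp)
  fix x y x' y' assume h: "x < m" "y < m" "x' < m" "y' < m" "grid_param m x y = grid_param m x' y'"
  have "x = x'"
  proof (rule ccontr)
    assume "x \<noteq> x'"
    then consider "x < x'" | "x' < x" by linarith
    then show False
      using block_le[of x x' m] block_le[of x' x m] grid_param_bounds[of x m y]
        grid_param_bounds[of x' m y'] h by (cases; linarith)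
  qed
  moreover from this have "y = y'" using h unfolding grid_param_def by (auto split: if_splits)
  ultimately show "x = x' \<and> y = y'" by simp
qed

text \<open>Roots of the separating polynomials: \<open>gap_root N\<close> lies strictly between the parameters \<open>N\<close>
  and \<open>N + 1\<close>, \<open>grid_root N\<close> is the parameter \<open>N\<close> itself (a root at a shared vertex).\<close>
definition gap_root :: "nat \<Rightarrow> real" where "gap_root N = real N + 1/2"

definition grid_root :: "nat \<Rightarrow> real" where "grid_root N = real N"

lemma real_lt_gap_root: "(real p < gap_root N) = (p \<le> N)"
  unfolding gap_root_def by linarith

lemma root_simps:
  "(real p < gap_root N) = (p \<le> N)" "(real p \<le> gap_root N) = (p \<le> N)"
  "(gap_root N < real p) = (N < p)" "(gap_root N \<le> real p) = (N < p)"
  "(real p = gap_root N) = False" "(gap_root N = real p) = False"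
  "(real p < grid_root N) = (p < N)" "(real p \<le> grid_root N) = (p \<le> N)"
  "(grid_root N < real p) = (N < p)" "(grid_root N \<le> real p) = (N \<le> p)"
  "(real p = grid_root N) = (p = N)" "(grid_root N = real p) = (N = p)"
  using real_lt_gap_root[of p N] unfolding grid_root_def by (auto simp: gap_root_def)

lemma root_prod_simps: "root_prod [] \<epsilon> t = \<epsilon>" "root_prod (r # R) \<epsilon> t = root_prod R \<epsilon> t * (t - r)"
  unfolding root_prod_def by (auto simp: algebra_simps)

text \<open>Disjoint pairs \<open>i < j\<close>, \<open>k < l\<close> with \<open>i < k\<close>, in the three possible relative orders; the
  witnesses are checked by evaluating the sign of the polynomial at all eight parameters.\<close>
lemma separable_consecutive:
  assumes "i < j" "j < k" "k < l" "l < m"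
  shows "separable m i j k l"
proof -
  have c: "m*i+m \<le> m*j" "m*j+m \<le> m*k" "m*k+m \<le> m*l" using assms block_le by auto
  show ?thesis unfolding separable_def
    by (rule exI[of _ 1], rule exI[of _ "[gap_root (m*j+m)]"])
      (use assms c grid_param_bounds[of i m i] grid_param_bounds[of i m j]
        grid_param_bounds[of j m i] grid_param_bounds[of j m j] grid_param_bounds[of k m k]
        grid_param_bounds[of k m l] grid_param_bounds[of l m k] grid_param_bounds[of l m l] in
        \<open>auto simp: cross_def root_prod_simps root_simps mult_le_0_iff zero_le_mult_iff\<close>)
qed

lemma separable_interleaved:
  assumes "i < k" "k < j" "j < l" "l < m"
  shows "separable m i j k l"
proof -
  have c: "m*i+m \<le> m*k" "m*i+m \<le> m*j" "m*i+m \<le> m*l" "m*k+m \<le> m*j" "m*k+m \<le> m*l" "m*j+m \<le> m*l"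
    using assms block_le by auto
  show ?thesis unfolding separable_def
    by (rule exI[of _ 1], rule exI[of _ "[gap_root (m*i+m), gap_root (m*k+m), gap_root (m*j+m)]"])
      (use assms c grid_param_bounds[of i m i] grid_param_bounds[of i m j]
        grid_param_bounds[of j m i] grid_param_bounds[of j m j] grid_param_bounds[of k m k]
        grid_param_bounds[of k m l] grid_param_bounds[of l m k] grid_param_bounds[of l m l] in
        \<open>auto simp: cross_def root_prod_simps root_simps mult_le_0_iff zero_le_mult_iff grid_param_def\<close>)
qed

lemma separable_nested:
  assumes "i < k" "k < l" "l < j" "j < m"
  shows "separable m i j k l"
proof -
  have c: "m*i+m \<le> m*k" "m*i+m \<le> m*l" "m*i+m \<le> m*j" "m*k+m \<le> m*l" "m*k+m \<le> m*j" "m*l+m \<le> m*j"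
    using assms block_le by auto
  show ?thesis unfolding separable_def
    by (rule exI[of _ "-1"], rule exI[of _ "[gap_root (m*i+m), gap_root (m*l+m)]"])
      (use assms c grid_param_bounds[of i m i] grid_param_bounds[of i m j]
        grid_param_bounds[of j m i] grid_param_bounds[of j m j] grid_param_bounds[of k m k]
        grid_param_bounds[of k m l] grid_param_bounds[of l m k] grid_param_bounds[of l m l] in
        \<open>auto simp: cross_def root_prod_simps root_simps mult_le_0_iff zero_le_mult_iff grid_param_def\<close>)
qed

text \<open>Pairs \<open>{i, j}\<close>, \<open>{i, k}\<close> sharing the element \<open>i\<close>: the common vertex \<open>(i, i)\<close> must be a root,
  which is where \<open>grid_root\<close> comes in.\<close>
lemma separable_shared_left:
  assumes "i < j" "j < k" "k < m"
  shows "separable m i j i k"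
proof -
  have c: "m*i+m \<le> m*j" "m*i+m \<le> m*k" "m*j+m \<le> m*k" using assms block_le by auto
  show ?thesis unfolding separable_def
    by (rule exI[of _ "1"], rule exI[of _ "[gap_root (m*i+j), grid_root (m*i+m), gap_root (m*j+m)]"])
      (use assms c grid_param_bounds[of i m i] grid_param_bounds[of i m j]
        grid_param_bounds[of i m k] grid_param_bounds[of j m i] grid_param_bounds[of j m j]
        grid_param_bounds[of k m i] grid_param_bounds[of k m k] in
        \<open>auto simp: cross_def root_prod_simps root_simps mult_le_0_iff zero_le_mult_iff grid_param_def\<close>)
qed

lemma separable_shared_middle:
  assumes "j < i" "i < k" "k < m"
  shows "separable m i j i k"
proof -
  have c: "m*j+m \<le> m*i" "m*j+m \<le> m*k" "m*i+m \<le> m*k" using assms block_le by auto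
  show ?thesis unfolding separable_def
    by (rule exI[of _ "1"], rule exI[of _ "[gap_root (m*i+i), grid_root (m*i+m), gap_root (m*i+m)]"])
      (use assms c grid_param_bounds[of i m i] grid_param_bounds[of i m j]
        grid_param_bounds[of i m k] grid_param_bounds[of j m i] grid_param_bounds[of j m j]
        grid_param_bounds[of k m i] grid_param_bounds[of k m k] in
        \<open>auto simp: cross_def root_prod_simps root_simps mult_le_0_iff zero_le_mult_iff grid_param_def\<close>)
qed

lemma separable_shared_right:
  assumes "j < k" "k < i" "i < m"
  shows "separable m i j i k"
proof -
  have c: "m*j+m \<le> m*k" "m*j+m \<le> m*i" "m*k+m \<le> m*i" using assms block_le by auto
  show ?thesis unfolding separable_def
    by (rule exI[of _ "1"], rule exI[of _ "[gap_root (m*j+m), gap_root (m*i+i-k), grid_root (m*i+m)]"])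
      (use assms c grid_param_bounds[of i m i] grid_param_bounds[of i m j]
        grid_param_bounds[of i m k] grid_param_bounds[of j m i] grid_param_bounds[of j m j]
        grid_param_bounds[of k m i] grid_param_bounds[of k m k] in
        \<open>auto simp: cross_def root_prod_simps root_simps mult_le_0_iff zero_le_mult_iff grid_param_def\<close>)
qed

lemma separable_shared:
  assumes "i < m" "j < m" "k < m" "i \<noteq> j" "i \<noteq> k" "j \<noteq> k"
  shows "separable m i j i k"
proof (cases "j < k")
  case True
  then show ?thesis
    using assms separable_shared_left[of i j k m] separable_shared_middle[of j i k m]
      separable_shared_right[of j k i m] by (metis linorder_neqE_nat)
next
  case False
  then have "separable m i k i j"
    using assms separable_shared_left[of i k j m] separable_shared_middle[of k i j m]
      separable_shared_right[of k j i m] by (metis linorder_neqE_nat)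
  then show ?thesis by (rule separable_sym)
qed

lemma separable_disjoint:
  assumes "i < j" "k < l" "i < k" "l < m" "j < m" "j \<noteq> k" "j \<noteq> l"
  shows "separable m i j k l"
  using assms separable_consecutive[of i j k l m] separable_interleaved[of i k j l m]
    separable_nested[of i k l j m] by (metis linorder_neqE_nat)

lemma separable_distinct_pairs:
  assumes "i < j" "j < m" "k < l" "l < m" "(i,j) \<noteq> (k,l)"
  shows "separable m i j k l"
proof -
  consider "i = k" | "i = l" | "j = k" | "j = l" | "i \<noteq> k" "i \<noteq> l" "j \<noteq> k" "j \<noteq> l" by blast
  then show ?thesis
  proof cases
    case 1 then show ?thesis using assms separable_shared[of i m j l] by auto
  next
    case 2 then show ?thesis using assms separable_shared[of i m j k] separable_swap2 by auto
  next
    case 3 then show ?thesis using assms separable_shared[of j m i l] separable_swap1 by auto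
  next
    case 4 then show ?thesis
      using assms separable_shared[of j m i k] separable_swap1 separable_swap2 by auto
  next
    case 5 then show ?thesis
      using assms separable_disjoint[of i j k l m] separable_disjoint[of k l i j m] separable_sym
      by (metis linorder_neqE_nat)
  qed
qed

section \<open>The cone over the grid hypergraph\<close>

text \<open>The vertices are natural numbers: grid vertex \<open>(x, y)\<close> is \<open>grid_param m x y - 1 < m\<^sup>2\<close> and
  the \<open>a\<close> apices are \<open>m\<^sup>2, \<dots>, m\<^sup>2 + a - 1\<close>; vertex \<open>v\<close> is placed at parameter \<open>v + 1\<close> of the
  moment curve.\<close>
definition grid_vertex :: "nat \<Rightarrow> nat \<Rightarrow> nat \<Rightarrow> nat" where
  "grid_vertex m x y = grid_param m x y - 1"

definition apices :: "nat \<Rightarrow> nat \<Rightarrow> nat set" where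
  "apices m a = {m*m..<m*m + a}"

definition cone_edge :: "nat \<Rightarrow> nat \<Rightarrow> nat \<Rightarrow> nat \<Rightarrow> nat set" where
  "cone_edge m a i j = (\<lambda>(x,y). grid_vertex m x y) ` cross i j \<union> apices m a"

definition cone_edges :: "nat \<Rightarrow> nat \<Rightarrow> nat set set" where
  "cone_edges m a = {cone_edge m a i j | i j. i < j \<and> j < m}"

lemma grid_vertex_param: "x < m \<Longrightarrow> y < m \<Longrightarrow> real (grid_vertex m x y) + 1 = real (grid_param m x y)"
  using grid_param_bounds[of x m y] unfolding grid_vertex_def by (simp add: of_nat_diff)

lemma grid_vertex_lt: "x < m \<Longrightarrow> y < m \<Longrightarrow> grid_vertex m x y < m*m"
  using grid_param_bounds[of x m y] grid_param_le_square[of x m y] unfolding grid_vertex_def by arith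

lemma grid_vertex_inj: "inj_on (\<lambda>(x,y). grid_vertex m x y) {p. fst p < m \<and> snd p < m}"
proof (rule inj_onI, clarsimp)
  fix x y x' y' assume h: "x < m" "y < m" "x' < m" "y' < m" "grid_vertex m x y = grid_vertex m x' y'"
  then have "grid_param m x y = grid_param m x' y'"
    using grid_vertex_param[of x m y] grid_vertex_param[of x' m y'] by simp
  then show "x = x' \<and> y = y'" using inj_onD[OF grid_param_inj[of m], of "(x,y)" "(x',y')"] h by simp
qed

lemma cross_grid: "i < m \<Longrightarrow> j < m \<Longrightarrow> cross i j \<subseteq> {p. fst p < m \<and> snd p < m}"
  unfolding cross_def by auto

lemma cross_vertex_lt: "i < m \<Longrightarrow> j < m \<Longrightarrow> v \<in> (\<lambda>(x,y). grid_vertex m x y) ` cross i j \<Longrightarrow> v < m*m"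
  unfolding cross_def using grid_vertex_lt by auto

lemma cone_edge_card:
  assumes "i < j" "j < m"
  shows "finite (cone_edge m a i j)" "card (cone_edge m a i j) = a + 4"
proof -
  let ?G = "(\<lambda>(x,y). grid_vertex m x y) ` cross i j"
  have "card (cross i j) = 4" using assms unfolding cross_def by (simp add: card_insert_if)
  then have "card ?G = 4"
    using inj_on_subset[OF grid_vertex_inj cross_grid[of i m j]] assms by (simp add: card_image)
  moreover have "?G \<inter> apices m a = {}"
    using cross_vertex_lt[of i m j] assms unfolding apices_def by fastforce
  moreover have "finite ?G" unfolding cross_def by simp
  ultimately show "finite (cone_edge m a i j)" "card (cone_edge m a i j) = a + 4"
    unfolding cone_edge_def apices_def by (simp_all add: card_Un_disjoint)
qed

lemma cone_edges_uniform:
  assumes "m*m + a \<le> n"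
  shows "uniform_hypergraph (a+4) {..<n} (cone_edges m a)"
proof -
  have "cone_edge m a i j \<subseteq> {..<n}" if "i < j" "j < m" for i j
    using cross_vertex_lt[of i m j] that assms unfolding cone_edge_def apices_def by fastforce
  then show ?thesis unfolding uniform_hypergraph_def cone_edges_def using cone_edge_card by auto
qed

text \<open>The factor of the separating polynomials that vanishes at the parameters of the apices;
  it is positive on the parameters of the grid vertices.\<close>
definition apex_roots :: "nat \<Rightarrow> nat \<Rightarrow> real list" where
  "apex_roots m a = map (\<lambda>v. real v + 1) [m*m..<m*m + a]"

definition apex_factor :: "nat \<Rightarrow> nat \<Rightarrow> real \<Rightarrow> real" where
  "apex_factor m a t = (-1)^a * prod_list (map (\<lambda>r. t - r) (apex_roots m a))"

lemma apex_factor_pos: "t \<le> real (m*m) \<Longrightarrow> apex_factor m a t > 0"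
proof (induction a)
  case 0 then show ?case by (simp add: apex_factor_def apex_roots_def)
next
  case (Suc a)
  have "apex_factor m (Suc a) t = apex_factor m a t * (real (m*m + a) + 1 - t)"
    by (simp add: apex_factor_def apex_roots_def algebra_simps)
  then show ?case using Suc by simp
qed

lemma apex_factor_zero: "v \<in> apices m a \<Longrightarrow> apex_factor m a (real v + 1) = 0"
  unfolding apex_factor_def apex_roots_def apices_def by (auto simp: prod_list_zero_iff)

lemma cone_edge_vertex_cases:
  assumes "i < m" "j < m" "v \<in> cone_edge m a i j"
  obtains x y where "(x,y) \<in> cross i j" "v = grid_vertex m x y"
    "real v + 1 = real (grid_param m x y)" "real v + 1 \<le> real (m*m)"
  | "v \<in> apices m a" "apex_factor m a (real v + 1) = 0"
proof (cases "v \<in> apices m a")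
  case True then show ?thesis using that(2) apex_factor_zero by blast
next
  case False
  then obtain x y where xy: "(x,y) \<in> cross i j" "v = grid_vertex m x y"
    using assms unfolding cone_edge_def by auto
  then have "x < m" "y < m" using cross_grid[of i m j] assms by auto
  then show ?thesis
    using that(1)[OF xy] grid_vertex_param grid_param_le_square xy(2) by (metis of_nat_le_iff)
qed

lemma cone_edge_aff_dim:
  fixes \<beta> :: "nat \<Rightarrow> 'a::euclidean_space"
  assumes \<beta>: "bij_betw \<beta> {..<DIM('a)} Basis" and dim: "DIM('a) = a + 3" and "i < j" "j < m"
  shows "aff_dim ((\<lambda>v. moment_curve \<beta> (real v + 1)) ` cone_edge m a i j) = int (a + 4) - 1"
proof -
  let ?P = "(\<lambda>v. real v + 1) ` cone_edge m a i j"
  have image: "(\<lambda>v. moment_curve \<beta> (real v + 1)) ` cone_edge m a i j = moment_curve \<beta> ` ?P"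
    by (simp add: image_image)
  have "card ?P = a + 4" "finite ?P"
    using cone_edge_card[OF assms(3,4)] by (simp_all add: card_image inj_on_def)
  moreover have "card (moment_curve \<beta> ` ?P) = card ?P"
    using moment_curve_inj[OF \<beta>] by (simp add: card_image inj_on_subset)
  moreover have "\<not> affine_dependent (moment_curve \<beta> ` ?P)"
    using moment_curve_affine_independent[OF \<beta>] calculation dim by simp
  ultimately have "aff_dim (moment_curve \<beta> ` ?P) = int (a + 4) - 1"
    using affine_independent_iff_card by metis
  then show ?thesis using image by simp
qed

text \<open>Two distinct edges meet properly: the separating cubic of their crosses times the apex factor
  is a polynomial of degree \<open>\<le> 3 + a = d\<close> satisfying the moment curve separation criterion.\<close>
lemma cone_edges_meet_properly:
  fixes \<beta> :: "nat \<Rightarrow> 'a::euclidean_space"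
  assumes \<beta>: "bij_betw \<beta> {..<DIM('a)} Basis" and dim: "DIM('a) = a + 3"
    and ij: "i < j" "j < m" and kl: "k < l" "l < m" and "(i,j) \<noteq> (k,l)"
  shows "convex hull (\<lambda>v. moment_curve \<beta> (real v + 1)) ` cone_edge m a i j
           \<inter> convex hull (\<lambda>v. moment_curve \<beta> (real v + 1)) ` cone_edge m a k l
       = convex hull (\<lambda>v. moment_curve \<beta> (real v + 1)) ` (cone_edge m a i j \<inter> cone_edge m a k l)"
proof -
  obtain \<epsilon> R where R: "length R \<le> 3"
    and neg: "\<And>x y. (x,y) \<in> cross i j \<Longrightarrow> root_prod R \<epsilon> (real (grid_param m x y)) \<le> 0"
    and pos: "\<And>x y. (x,y) \<in> cross k l \<Longrightarrow> root_prod R \<epsilon> (real (grid_param m x y)) \<ge> 0"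
    and zero: "\<And>x y. (x,y) \<in> cross i j \<Longrightarrow> root_prod R \<epsilon> (real (grid_param m x y)) = 0 \<Longrightarrow>
                 (x,y) \<in> cross k l"
    using separable_distinct_pairs[OF ij kl \<open>(i,j) \<noteq> (k,l)\<close>] unfolding separable_def by fast
  define q where "q = smult (\<epsilon> * (-1)^a) (root_poly (R @ apex_roots m a))"
  have q: "poly q t = root_prod R \<epsilon> t * apex_factor m a t" for t
    unfolding q_def root_prod_def apex_factor_def by (simp add: poly_root_poly)
  have "degree q \<le> length (R @ apex_roots m a)"
    unfolding q_def using degree_root_poly degree_smult_le le_trans by blast
  then have deg: "degree q \<le> DIM('a)" using R dim by (simp add: apex_roots_def)
  have fin: "finite (cone_edge m a i j)" "finite (cone_edge m a k l)"
    using cone_edge_card ij kl by blast+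
  have "i < m" "k < m" using ij kl by simp_all
  show ?thesis
  proof (rule moment_curve_separation[OF \<beta> deg fin])
    fix v assume "v \<in> cone_edge m a i j"
    with \<open>i < m\<close> ij(2) show "poly q (real v + 1) \<le> 0"
    proof (rule cone_edge_vertex_cases)
      fix x y assume "(x,y) \<in> cross i j" "v = grid_vertex m x y"
        "real v + 1 = real (grid_param m x y)" "real v + 1 \<le> real (m*m)"
      then show ?thesis
        using neg apex_factor_pos unfolding q by (metis less_imp_le mult_nonpos_nonneg)
    qed (simp add: q)
  next
    fix v assume "v \<in> cone_edge m a k l"
    with \<open>k < m\<close> kl(2) show "poly q (real v + 1) \<ge> 0"
    proof (rule cone_edge_vertex_cases)
      fix x y assume "(x,y) \<in> cross k l" "v = grid_vertex m x y"
        "real v + 1 = real (grid_param m x y)" "real v + 1 \<le> real (m*m)"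
      then show ?thesis
        using pos apex_factor_pos unfolding q by (metis less_imp_le zero_le_mult_iff)
    qed (simp add: q)
  next
    fix v assume v: "v \<in> cone_edge m a i j" and root: "poly q (real v + 1) = 0"
    from \<open>i < m\<close> ij(2) v show "v \<in> cone_edge m a k l"
    proof (rule cone_edge_vertex_cases)
      fix x y assume xy: "(x,y) \<in> cross i j" "v = grid_vertex m x y"
        "real v + 1 = real (grid_param m x y)" "real v + 1 \<le> real (m*m)"
      then have "root_prod R \<epsilon> (real (grid_param m x y)) = 0"
        using root apex_factor_pos[of "real v + 1" m a] unfolding q by simp
      then have "(x,y) \<in> cross k l" using zero xy(1) by blast
      then show ?thesis using xy(2) unfolding cone_edge_def by force
    next
      assume "v \<in> apices m a"
      then show ?thesis unfolding cone_edge_def by blast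
    qed
  qed
qed

lemma cone_lin_embedding:
  fixes \<beta> :: "nat \<Rightarrow> 'a::euclidean_space"
  assumes \<beta>: "bij_betw \<beta> {..<DIM('a)} Basis" and dim: "DIM('a) = a + 3"
  shows "lin_embedding (\<lambda>v. moment_curve \<beta> (real v + 1)) (a + 4) (cone_edges m a)"
  unfolding lin_embedding_def
proof (intro conjI ballI)
  fix e assume "e \<in> cone_edges m a"
  then show "aff_dim ((\<lambda>v. moment_curve \<beta> (real v + 1)) ` e) = int (a + 4) - 1"
    unfolding cone_edges_def using cone_edge_aff_dim[OF \<beta> dim] by blast
next
  fix e1 e2 assume "e1 \<in> cone_edges m a" "e2 \<in> cone_edges m a"
  then obtain i j k l where ij: "i < j" "j < m" "e1 = cone_edge m a i j"
    and kl: "k < l" "l < m" "e2 = cone_edge m a k l"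
    unfolding cone_edges_def by auto
  then show "convex hull (\<lambda>v. moment_curve \<beta> (real v + 1)) ` e1
        \<inter> convex hull (\<lambda>v. moment_curve \<beta> (real v + 1)) ` e2
      = convex hull (\<lambda>v. moment_curve \<beta> (real v + 1)) ` (e1 \<inter> e2)"
    using cone_edges_meet_properly[OF \<beta> dim ij(1,2) kl(1,2)] by (cases "(i,j) = (k,l)") auto
qed

section \<open>The lower bound\<close>

definition cone_clique :: "nat \<Rightarrow> nat \<Rightarrow> nat set" where
  "cone_clique m a = (\<lambda>x. grid_vertex m x x) ` {..<m} \<union> apices m a"

lemma cone_clique_common_edge:
  assumes "2 \<le> m" "u \<in> cone_clique m a" "w \<in> cone_clique m a"
  shows "\<exists>e\<in>cone_edges m a. u \<in> e \<and> w \<in> e"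
proof -
  have diagonal_pair: "\<exists>e\<in>cone_edges m a. grid_vertex m x x \<in> e \<and> grid_vertex m y y \<in> e"
    if "x < m" "y < m" for x y
  proof -
    define z where "z = (if x = y then (if x = 0 then 1 else 0) else y)"
    have "z < m" "x \<noteq> z" "y = x \<or> y = z" using that assms(1) unfolding z_def by auto
    then have "min x z < max x z" "max x z < m"
      and "(x,x) \<in> cross (min x z) (max x z)" "(y,y) \<in> cross (min x z) (max x z)"
      using that unfolding cross_def by (auto simp: min_def max_def)
    moreover from calculation(1,2) have "cone_edge m a (min x z) (max x z) \<in> cone_edges m a"
      unfolding cone_edges_def by blast
    ultimately show ?thesis unfolding cone_edge_def by (metis (no_types, lifting) UnI1 case_prod_conv image_eqI)
  qed
  have apex_everywhere: "apices m a \<subseteq> e" if "e \<in> cone_edges m a" for e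
    using that unfolding cone_edges_def cone_edge_def by blast
  have near_diagonal: "\<exists>x<m. v \<in> insert (grid_vertex m x x) (apices m a)" if "v \<in> cone_clique m a" for v
  proof -
    from that consider x where "x < m" "v = grid_vertex m x x" | "v \<in> apices m a"
      unfolding cone_clique_def by blast
    then show ?thesis using assms(1) by cases (auto intro: exI[of _ 0])
  qed
  obtain x y where "x < m" "u \<in> insert (grid_vertex m x x) (apices m a)"
    and "y < m" "w \<in> insert (grid_vertex m y y) (apices m a)"
    using near_diagonal assms(2,3) by blast
  moreover obtain e where e: "e \<in> cone_edges m a" "grid_vertex m x x \<in> e" "grid_vertex m y y \<in> e"
    using diagonal_pair[OF \<open>x < m\<close> \<open>y < m\<close>] by blast
  moreover have "apices m a \<subseteq> e" using apex_everywhere[OF e(1)] .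
  ultimately show ?thesis by blast
qed

lemma cone_clique_card: "card (cone_clique m a) = m + a"
proof -
  have "inj_on (\<lambda>x. grid_vertex m x x) {..<m}"
    using grid_vertex_inj[of m] unfolding inj_on_def by auto
  then have "card ((\<lambda>x. grid_vertex m x x) ` {..<m}) = m" by (simp add: card_image)
  moreover have "(\<lambda>x. grid_vertex m x x) ` {..<m} \<inter> apices m a = {}"
    using grid_vertex_lt unfolding apices_def by fastforce
  ultimately show ?thesis unfolding cone_clique_def apices_def by (simp add: card_Un_disjoint)
qed

lemma cone_clique_subset:
  assumes "m*m + a \<le> n"
  shows "cone_clique m a \<subseteq> {..<n}"
  using grid_vertex_lt assms unfolding cone_clique_def apices_def by fastforce

lemma cone_lower_bound:
  assumes dim: "DIM('a::euclidean_space) = a + 3" and "2 \<le> m" and n: "m*m + a \<le> n"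
  shows "m + a \<le> chi_s_dk TYPE('a) (a + 4) n"
proof -
  obtain \<beta> :: "nat \<Rightarrow> 'a" where \<beta>: "bij_betw \<beta> {..<DIM('a)} Basis"
    using ex_bij_betw_nat_finite[of "Basis :: 'a set"] by (auto simp: atLeast0LessThan)
  have U: "uniform_hypergraph (a + 4) {..<n} (cone_edges m a)" using cone_edges_uniform[OF n] .
  have "m + a = card (cone_clique m a)" by (simp add: cone_clique_card)
  also have "\<dots> \<le> strong_chromatic (a + 4) {..<n} (cone_edges m a)"
    using strong_chromatic_ge_clique[OF U cone_clique_subset[OF n]] cone_clique_common_edge[OF \<open>2 \<le> m\<close>]
    by blast
  also have "\<dots> \<le> chi_s_dk TYPE('a) (a + 4) n"
    using chi_s_dk_ge[OF U _ cone_lin_embedding[OF \<beta> dim]] by simp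
  finally show ?thesis .
qed

lemma floor_sqrt_nat:
  fixes X :: real
  assumes "4 \<le> X"
  shows "2 \<le> nat \<lfloor>sqrt X\<rfloor>" "real (nat \<lfloor>sqrt X\<rfloor> * nat \<lfloor>sqrt X\<rfloor>) \<le> X"
    "int (nat \<lfloor>sqrt X\<rfloor>) = \<lfloor>sqrt X\<rfloor>"
proof -
  have "2 \<le> sqrt X" using real_sqrt_le_mono[OF assms] by simp
  then show "2 \<le> nat \<lfloor>sqrt X\<rfloor>" "int (nat \<lfloor>sqrt X\<rfloor>) = \<lfloor>sqrt X\<rfloor>" by linarith+
  then have "real (nat \<lfloor>sqrt X\<rfloor>) \<le> sqrt X" by (metis of_int_floor_le of_int_of_nat_eq)
  then have "real (nat \<lfloor>sqrt X\<rfloor>) * real (nat \<lfloor>sqrt X\<rfloor>) \<le> sqrt X * sqrt X"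
    by (intro mult_mono) (use assms in auto)
  then show "real (nat \<lfloor>sqrt X\<rfloor> * nat \<lfloor>sqrt X\<rfloor>) \<le> X" using assms by simp
qed

theorem mainTheorem10:
  fixes d k n :: nat
  assumes "DIM('a::euclidean_space) = d" and "d \<ge> 3" and "n \<ge> d + 1"
    and "2 \<le> k" and "k \<le> d + 1"
  shows "chi_s_dk TYPE('a) (d + 1) n \<le> chi_s_dk TYPE('a) k n \<and>
         \<lfloor>sqrt (real n - real d + 3)\<rfloor> + int d - 3 \<le> int (chi_s_dk TYPE('a) (d + 1) n)"
proof
  show "chi_s_dk TYPE('a) (d + 1) n \<le> chi_s_dk TYPE('a) k n"
    using chi_s_dk_antimono[OF assms(4,5)] .
  define m where "m = nat \<lfloor>sqrt (real n - real d + 3)\<rfloor>"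
  have "4 \<le> real n - real d + 3" using assms(3) by simp
  note m = floor_sqrt_nat[OF this, folded m_def]
  have "m * m + (d - 3) \<le> n" using m(2) assms(2) by linarith
  moreover have "DIM('a) = (d - 3) + 3" "(d - 3) + 4 = d + 1" using assms(1,2) by simp_all
  ultimately have "m + (d - 3) \<le> chi_s_dk TYPE('a) (d + 1) n"
    using cone_lower_bound m(1) by metis
  then show "\<lfloor>sqrt (real n - real d + 3)\<rfloor> + int d - 3 \<le> int (chi_s_dk TYPE('a) (d + 1) n)"
    using m(3) assms(2) by linarith
qed

end
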